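(* Let $G$ be a connected finite simple graph on the vertex set $\{1,\ldots,d\}$ with $d\ge 2$. Then the symmetric edge polytope $\mathcal{P}^{\pm}_G$, regarded as a Fano polytope in $\mathbb{R}^{d-1}$ via the identification $\phi:\mathbb{R}^{d-1}\to\mathcal{H}$, cannot split if and only if $G$ is 2-connected.
   Context: For an edge $e=\{i,j\}$ set $\sigma(e)=\mathbf{e}_i-\mathbf{e}_j\in\mathbb{R}^d$; $\mathcal{P}^{\pm}_G$ is the convex hull of $\{\pm\sigma(e): e\in E(G)\}$. It lies in $\mathcal{H}=\{x: x_1+\cdots+x_d=0\}$, identified with $\mathbb{R}^{d-1}$ via $\phi(y_1,\ldots,y_{d-1})=(y_1,\ldots,y_{d-1},-(y_1+\cdots+y_{d-1}))$; it is then a Fano polytope (a full-dimensional integral polytope whose only interior lattice point is the origin). A Fano polytope $\mathcal{P}\subset\mathbb{R}^D$ splits if, after a unimodular change of lattice coordinates (an element of $GL_D(\mathbb{Z})$, e.g. a renumbering of coordinates), there are $D_1,D_2\ge1$ with $D_1+D_2=D$ and Fano polytopes $\mathcal{P}_1\subset\mathbb{R}^{D_1}$, $\mathcal{P}_2\subset\mathbb{R}^{D_2}$ such that $\mathcal{P}=\operatorname{conv}(\{(a,\mathbf{0}):a\in\mathcal{P}_1\}\cup\{(\mathbf{0},b):b\in\mathcal{P}_2\})$. A connected graph $G$ is 2-connected if for every vertex $i$ the induced subgraph on $V(G)\setminus\{i\}$ is connected. *)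

theory Defs
  imports "HOL-Analysis.Analysis"
begin

definition simple_graph :: "nat \<Rightarrow> nat set set \<Rightarrow> bool" where
  "simple_graph d E \<longleftrightarrow>
     (\<forall>e\<in>E. \<exists>i j. e = {i, j} \<and> i \<noteq> j \<and> i \<in> {1..d} \<and> j \<in> {1..d})"

definition connected_on :: "nat set \<Rightarrow> nat set set \<Rightarrow> bool" where
  "connected_on V E \<longleftrightarrow>
     (\<forall>u\<in>V. \<forall>v\<in>V. (\<lambda>a b. a \<in> V \<and> b \<in> V \<and> {a, b} \<in> E)\<^sup>*\<^sup>* u v)"

definition graph_connected :: "nat \<Rightarrow> nat set set \<Rightarrow> bool" where
  "graph_connected d E \<longleftrightarrow> connected_on {1..d} E"

definition two_connected :: "nat \<Rightarrow> nat set set \<Rightarrow> bool" where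
  "two_connected d E \<longleftrightarrow> graph_connected d E \<and>
     (\<forall>i\<in>{1..d}. connected_on ({1..d} - {i}) E)"

section \<open>R^D as functions nat => real vanishing from index D on\<close>

definition Rn :: "nat \<Rightarrow> (nat \<Rightarrow> real) set" where
  "Rn D = {x. \<forall>k\<ge>D. x k = 0}"

definition Zn :: "nat \<Rightarrow> (nat \<Rightarrow> real) set" where
  "Zn D = {x \<in> Rn D. \<forall>k<D. x k \<in> \<int>}"

definition conv :: "(nat \<Rightarrow> real) set \<Rightarrow> (nat \<Rightarrow> real) set" where
  "conv S = {x. \<exists>F c. finite F \<and> F \<subseteq> S \<and> F \<noteq> {} \<and> (\<forall>v\<in>F. c v \<ge> 0)
       \<and> sum c F = 1 \<and> x = (\<lambda>k. \<Sum>v\<in>F. c v * v k)}"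

definition aff_hull :: "(nat \<Rightarrow> real) set \<Rightarrow> (nat \<Rightarrow> real) set" where
  "aff_hull S = {x. \<exists>F c. finite F \<and> F \<subseteq> S \<and> F \<noteq> {}
       \<and> sum c F = 1 \<and> x = (\<lambda>k. \<Sum>v\<in>F. c v * v k)}"

text \<open>Interior of P inside R^D (box neighbourhoods give the standard topology).\<close>
definition interior_in :: "nat \<Rightarrow> (nat \<Rightarrow> real) set \<Rightarrow> (nat \<Rightarrow> real) set" where
  "interior_in D P = {x \<in> Rn D. \<exists>e>0. \<forall>y\<in>Rn D. (\<forall>k<D. \<bar>y k - x k\<bar> < e) \<longrightarrow> y \<in> P}"

definition integral_polytope :: "nat \<Rightarrow> (nat \<Rightarrow> real) set \<Rightarrow> bool" where
  "integral_polytope D P \<longleftrightarrow> (\<exists>V. finite V \<and> V \<subseteq> Zn D \<and> P = conv V)"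

definition full_dimensional :: "nat \<Rightarrow> (nat \<Rightarrow> real) set \<Rightarrow> bool" where
  "full_dimensional D P \<longleftrightarrow> aff_hull P = Rn D"

definition fano :: "nat \<Rightarrow> (nat \<Rightarrow> real) set \<Rightarrow> bool" where
  "fano D P \<longleftrightarrow> integral_polytope D P \<and> full_dimensional D P
      \<and> Zn D \<inter> interior_in D P = {(\<lambda>_. 0)}"

definition unimodular :: "nat \<Rightarrow> (nat \<Rightarrow> nat \<Rightarrow> int) \<Rightarrow> bool" where
  "unimodular D U \<longleftrightarrow> (\<exists>W. \<forall>i<D. \<forall>j<D.
      (\<Sum>k<D. U i k * W k j) = (if i = j then 1 else 0) \<and>
      (\<Sum>k<D. W i k * U k j) = (if i = j then 1 else 0))"

definition lin_map :: "nat \<Rightarrow> (nat \<Rightarrow> nat \<Rightarrow> int) \<Rightarrow> (nat \<Rightarrow> real) \<Rightarrow> (nat \<Rightarrow> real)" where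
  "lin_map D U x = (\<lambda>i. if i < D then (\<Sum>k<D. of_int (U i k) * x k) else 0)"

definition shift_by :: "nat \<Rightarrow> (nat \<Rightarrow> real) \<Rightarrow> (nat \<Rightarrow> real)" where
  "shift_by D1 b = (\<lambda>k. if k < D1 then 0 else b (k - D1))"

definition splits :: "nat \<Rightarrow> (nat \<Rightarrow> real) set \<Rightarrow> bool" where
  "splits D P \<longleftrightarrow> (\<exists>U D1 D2 P1 P2. unimodular D U \<and> D1 \<ge> 1 \<and> D2 \<ge> 1 \<and> D1 + D2 = D
      \<and> fano D1 P1 \<and> fano D2 P2
      \<and> lin_map D U ` P = conv (P1 \<union> shift_by D1 ` P2))"

text \<open>sigma(e) = e_i - e_j in R^d, coordinates indexed by vertices 1..d.\<close>
definition sigma :: "nat \<Rightarrow> nat \<Rightarrow> (nat \<Rightarrow> real)" where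
  "sigma i j = (\<lambda>k. (if k = i then 1 else 0) - (if k = j then 1 else 0))"

text \<open>Inverse of phi on H: keep coordinates 1..d-1, as indices 0..d-2 of R^(d-1).\<close>
definition phi_inv :: "nat \<Rightarrow> (nat \<Rightarrow> real) \<Rightarrow> (nat \<Rightarrow> real)" where
  "phi_inv d x = (\<lambda>k. if k < d - 1 then x (k + 1) else 0)"

definition sym_edge_polytope :: "nat \<Rightarrow> nat set set \<Rightarrow> (nat \<Rightarrow> real) set" where
  "sym_edge_polytope d E = conv {phi_inv d (\<lambda>k. s * sigma i j k) | s i j.
       s \<in> {1, -1} \<and> {i, j} \<in> E}"

end

theory Submission
  imports Defs "HOL-Library.Function_Algebras"
begin

text \<open>If v is a cut vertex, let C and B be the two sides of the cut. Changing lattice coordinates on H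
  so that x_v rather than x_d is the omitted coordinate, with the vertices of C listed before those of
  B, every edge vector lies either in the C-block or in the B-block, so the polytope is the free sum of
  the two edge polytopes of the graphs induced on C + v and B + v; these are Fano because both graphs
  are connected through v. Conversely, a splitting sorts every edge vector sigma(i,j) -- a vertex of
  the polytope, exposed by x_i - x_j -- into one of the two coordinate blocks, and both blocks occur.
  Some vertex v then meets edges va and vb of both kinds, and in a 2-connected graph a path from a
  to b avoiding v writes sigma(v,b) as a sum in which the part sigma(v,a) + (first block) is a
  nonzero vector lying in both blocks, which is impossible.\<close>

section \<open>Lattice coordinates and unimodular maps\<close>

instantiation "fun" :: (type, real_vector) real_vector
begin
definition scaleR_fun :: "real \<Rightarrow> ('a \<Rightarrow> 'b) \<Rightarrow> 'a \<Rightarrow> 'b" where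
  "scaleR_fun r f = (\<lambda>x. r *\<^sub>R f x)"
instance by standard (auto simp: scaleR_fun_def fun_eq_iff algebra_simps)
end

lemma scaleR_fun_apply [simp]: "(r *\<^sub>R f) x = r *\<^sub>R f x"
  by (simp add: scaleR_fun_def)

lemma sum_fun_apply: "(\<Sum>v\<in>F. f v) x = (\<Sum>v\<in>F. f v x)"
  by (induction F rule: infinite_finite_induct) auto

lemma sum_scaleR_fun_apply: "(\<Sum>v\<in>F. c v *\<^sub>R v) k = (\<Sum>v\<in>F. c v * (v::nat\<Rightarrow>real) k)"
  by (simp add: sum_fun_apply)

lemma conv_eq_convex_hull: "conv S = convex hull S"
proof (rule set_eqI)
  fix x
  show "x \<in> conv S \<longleftrightarrow> x \<in> convex hull S"
  proof
    assume "x \<in> conv S"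
    then obtain F c where F: "finite F" "F \<subseteq> S" "\<forall>v\<in>F. c v \<ge> 0" "sum c F = 1"
      "x = (\<lambda>k. \<Sum>v\<in>F. c v * v k)" unfolding conv_def by blast
    have "x = (\<Sum>v\<in>F. c v *\<^sub>R v)" using F(5) by (simp add: fun_eq_iff sum_scaleR_fun_apply)
    then show "x \<in> convex hull S" unfolding convex_hull_explicit using F by blast
  next
    assume "x \<in> convex hull S"
    then obtain F c where F: "finite F" "F \<subseteq> S" "\<forall>v\<in>F. c v \<ge> 0" "sum c F = 1"
      "x = (\<Sum>v\<in>F. c v *\<^sub>R v)" unfolding convex_hull_explicit by blast
    have "F \<noteq> {}" using F(4) by auto
    moreover have "x = (\<lambda>k. \<Sum>v\<in>F. c v * v k)" using F(5) by (simp add: fun_eq_iff sum_scaleR_fun_apply)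
    ultimately show "x \<in> conv S" unfolding conv_def using F by blast
  qed
qed

lemma aff_hull_eq_affine_hull: "aff_hull S = affine hull S"
proof (rule set_eqI)
  fix x
  show "x \<in> aff_hull S \<longleftrightarrow> x \<in> affine hull S"
  proof
    assume "x \<in> aff_hull S"
    then obtain F c where F: "finite F" "F \<subseteq> S" "F \<noteq> {}" "sum c F = 1"
      "x = (\<lambda>k. \<Sum>v\<in>F. c v * v k)" unfolding aff_hull_def by blast
    have "x = (\<Sum>v\<in>F. c v *\<^sub>R v)" using F(5) by (simp add: fun_eq_iff sum_scaleR_fun_apply)
    then show "x \<in> affine hull S" unfolding affine_hull_explicit using F by blast
  next
    assume "x \<in> affine hull S"
    then obtain F c where F: "finite F" "F \<subseteq> S" "F \<noteq> {}" "sum c F = 1"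
      "x = (\<Sum>v\<in>F. c v *\<^sub>R v)" unfolding affine_hull_explicit by blast
    have "x = (\<lambda>k. \<Sum>v\<in>F. c v * v k)" using F(5) by (simp add: fun_eq_iff sum_scaleR_fun_apply)
    then show "x \<in> aff_hull S" unfolding aff_hull_def using F by blast
  qed
qed

lemma subspace_Rn: "subspace (Rn D)"
  unfolding subspace_def Rn_def by auto

definition basis_vec :: "nat \<Rightarrow> nat \<Rightarrow> real" where
  "basis_vec i = (\<lambda>k. if k = i then 1 else 0)"

definition coords :: "(nat \<Rightarrow> nat) \<Rightarrow> nat \<Rightarrow> (nat \<Rightarrow> real) \<Rightarrow> (nat \<Rightarrow> real)" where
  "coords f D x = (\<lambda>k. if k < D then x (f k) else 0)"

lemma linear_coords: "linear (coords f D)"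
  by (rule linearI) (auto simp: coords_def fun_eq_iff)

lemma coords_in_Rn: "coords f D x \<in> Rn D"
  by (simp add: coords_def Rn_def)

lemma phi_inv_eq_coords: "phi_inv d = coords Suc (d - 1)"
  by (simp add: fun_eq_iff phi_inv_def coords_def)

lemma bij_betw_Suc_vertices: "d \<ge> 1 \<Longrightarrow> bij_betw Suc {..<d - 1} ({1..d} - {d})"
  by (auto simp: bij_betw_def lessThan_atLeast0 image_Suc_atLeastLessThan)

lemma linear_lin_map: "linear (lin_map D U)"
  by (rule linearI) (simp_all add: lin_map_def fun_eq_iff algebra_simps sum.distrib sum_distrib_left)

lemma lin_map_lin_map:
  "lin_map D A (lin_map D B y) = lin_map D (\<lambda>i j. \<Sum>k<D. A i k * B k j) y"
proof -
  have "(\<Sum>k<D. of_int (A i k) * lin_map D B y k) =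
        (\<Sum>m<D. of_int (\<Sum>k<D. A i k * B k m) * y m)" for i
  proof -
    have "(\<Sum>k<D. of_int (A i k) * lin_map D B y k) =
          (\<Sum>k<D. \<Sum>m<D. of_int (A i k) * of_int (B k m) * y m)"
      by (intro sum.cong) (auto simp: lin_map_def sum_distrib_left mult.assoc)
    also have "\<dots> = (\<Sum>m<D. \<Sum>k<D. of_int (A i k) * of_int (B k m) * y m)"
      by (rule sum.swap)
    also have "\<dots> = (\<Sum>m<D. of_int (\<Sum>k<D. A i k * B k m) * y m)"
      by (simp add: sum_distrib_right)
    finally show ?thesis .
  qed
  then show ?thesis by (simp add: lin_map_def fun_eq_iff)
qed

lemma lin_map_basis_vec:
  "j < D \<Longrightarrow> lin_map D A (basis_vec j) = (\<lambda>i. if i < D then of_int (A i j) else 0)"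
  by (simp add: lin_map_def basis_vec_def fun_eq_iff if_distrib cong: if_cong)

lemma lin_map_identity_matrix:
  assumes "\<And>i j. i < D \<Longrightarrow> j < D \<Longrightarrow> C i j = (if i = j then 1 else 0)" and "y \<in> Rn D"
  shows "lin_map D C y = y"
proof -
  have "(\<Sum>k<D. of_int (C i k) * y k) = (\<Sum>k<D. if k = i then y k else 0)" if "i < D" for i
    using assms(1) that by (intro sum.cong) auto
  then show ?thesis using assms(2) by (auto simp: lin_map_def Rn_def fun_eq_iff)
qed

lemma identity_matrix_if_lin_map_eq_id:
  assumes "\<forall>y\<in>Rn D. lin_map D C y = y" and "i < D" "j < D"
  shows "C i j = (if i = j then 1 else 0)"
proof -
  have "basis_vec j \<in> Rn D" using assms(3) by (simp add: basis_vec_def Rn_def)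
  then have "lin_map D C (basis_vec j) i = basis_vec j i" using assms(1) by simp
  then have "(of_int (C i j) :: real) = of_int (if i = j then 1 else 0)"
    using assms(2) unfolding lin_map_basis_vec[OF assms(3)] by (simp add: basis_vec_def)
  then show ?thesis by (simp only: of_int_eq_iff)
qed

lemma unimodularI:
  assumes "\<forall>y\<in>Rn D. lin_map D W (lin_map D U y) = y"
    and "\<forall>y\<in>Rn D. lin_map D U (lin_map D W y) = y"
  shows "unimodular D U"
  unfolding unimodular_def
proof (intro exI[of _ W] allI impI conjI)
  fix i j assume ij: "i < D" "j < D"
  show "(\<Sum>k<D. U i k * W k j) = (if i = j then 1 else 0)"
    using identity_matrix_if_lin_map_eq_id[of D "\<lambda>i j. \<Sum>k<D. U i k * W k j", OF _ ij]
      assms(2) by (simp only: lin_map_lin_map)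
  show "(\<Sum>k<D. W i k * U k j) = (if i = j then 1 else 0)"
    using identity_matrix_if_lin_map_eq_id[of D "\<lambda>i j. \<Sum>k<D. W i k * U k j", OF _ ij]
      assms(1) by (simp only: lin_map_lin_map)
qed

lemma inj_on_lin_map_unimodular:
  assumes "unimodular D U"
  shows "inj_on (lin_map D U) (Rn D)"
proof -
  obtain W where W: "\<forall>i<D. \<forall>j<D. (\<Sum>k<D. W i k * U k j) = (if i = j then 1 else 0)"
    using assms unfolding unimodular_def by blast
  have "lin_map D W (lin_map D U y) = y" if "y \<in> Rn D" for y
    unfolding lin_map_lin_map using W that by (intro lin_map_identity_matrix) auto
  then show ?thesis by (metis inj_on_inverseI)
qed

lemma sum_coords_bij:
  assumes "bij_betw f {..<D} (V - {w})" "finite V" "w \<in> V"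
  shows "(\<Sum>u\<in>V. x u) = x w + (\<Sum>m<D. x (f m))"
  using sum.remove[OF assms(2,3), of x] sum.reindex_bij_betw[OF assms(1), of x] by simp

text \<open>If x sums to zero over V, the coordinate x w omitted by coords f D is minus the sum of the
  others; hence the integer matrix coord_change g f w maps coords f D x to coords g D x.\<close>
definition coord_change :: "(nat \<Rightarrow> nat) \<Rightarrow> (nat \<Rightarrow> nat) \<Rightarrow> nat \<Rightarrow> nat \<Rightarrow> nat \<Rightarrow> int" where
  "coord_change g f w k m = (if g k = w then -1 else if f m = g k then 1 else 0)"

lemma lin_map_coord_change:
  assumes f: "bij_betw f {..<D} (V - {w})" and g: "bij_betw g {..<D} (V - {v})"
    and V: "finite V" "w \<in> V" and x: "(\<Sum>u\<in>V. x u) = 0"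
  shows "lin_map D (coord_change g f w) (coords f D x) = coords g D x"
proof (rule ext)
  fix k
  show "lin_map D (coord_change g f w) (coords f D x) k = coords g D x k"
  proof (cases "k < D")
    case True
    have "lin_map D (coord_change g f w) (coords f D x) k =
          (\<Sum>m<D. of_int (coord_change g f w k m) * x (f m))"
      using True by (simp add: lin_map_def coords_def)
    also have "\<dots> = x (g k)"
    proof (cases "g k = w")
      case True
      then show ?thesis
        using sum_coords_bij[OF f V, of x] x by (simp add: coord_change_def sum_negf)
    next
      case False
      then have "g k \<in> V - {w}" using g \<open>k < D\<close> by (auto simp: bij_betw_def)
      then obtain m0 where m0: "m0 < D" "f m0 = g k"
        using f by (metis bij_betw_imp_surj_on imageE lessThan_iff)
      have "f m = g k \<longleftrightarrow> m = m0" if "m < D" for m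
        using f m0 that by (auto simp: bij_betw_def inj_on_def)
      then have "(\<Sum>m<D. of_int (coord_change g f w k m) * x (f m)) =
                 (\<Sum>m<D. if m = m0 then x (f m) else 0)"
        using False by (intro sum.cong) (auto simp: coord_change_def)
      with m0 show ?thesis by simp
    qed
    finally show ?thesis using True by (simp add: coords_def)
  qed (simp add: lin_map_def coords_def)
qed

lemma coords_surj_sum_zero:
  assumes f: "bij_betw f {..<D} (V - {w})" and V: "finite V" "w \<in> V" and y: "y \<in> Rn D"
  obtains x where "(\<Sum>u\<in>V. x u) = 0" "coords f D x = y"
proof
  define x where
    "x u = (if u \<in> V - {w} then y (inv_into {..<D} f u) else if u = w then - (\<Sum>k<D. y k) else 0)"
    for u
  have xf: "x (f k) = y k" if "k < D" for k
    using f that by (auto simp: x_def bij_betw_def)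
  show "coords f D x = y"
    using y xf by (auto simp: coords_def Rn_def fun_eq_iff)
  show "(\<Sum>u\<in>V. x u) = 0"
    unfolding sum_coords_bij[OF f V] using xf by (simp add: x_def)
qed

lemma coords_eq_0_imp_vanish:
  assumes f: "bij_betw f {..<D} (V - {w})" and V: "finite V" "w \<in> V"
    and x: "(\<Sum>u\<in>V. x u) = 0" "coords f D x = 0" and u: "u \<in> V"
  shows "x u = 0"
proof -
  have xf: "x (f k) = 0" if "k < D" for k
    using x(2) that by (auto simp: coords_def fun_eq_iff dest: spec[of _ k])
  show ?thesis
  proof (cases "u = w")
    case True
    then show ?thesis using x(1) xf unfolding sum_coords_bij[OF f V] by simp
  next
    case False
    then obtain k where "k < D" "u = f k"
      using f u by (metis Diff_iff bij_betw_imp_surj_on empty_iff imageE insert_iff lessThan_iff)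
    then show ?thesis using xf by simp
  qed
qed

lemma unimodular_coord_change:
  assumes f: "bij_betw f {..<D} (V - {w})" and g: "bij_betw g {..<D} (V - {v})"
    and V: "finite V" "w \<in> V" "v \<in> V"
  shows "unimodular D (coord_change g f w)"
proof (rule unimodularI[where W = "coord_change f g v"])
  show "\<forall>y\<in>Rn D. lin_map D (coord_change f g v) (lin_map D (coord_change g f w) y) = y"
  proof
    fix y assume "y \<in> Rn D"
    then obtain x where x: "(\<Sum>u\<in>V. x u) = 0" "coords f D x = y"
      using coords_surj_sum_zero[OF f V(1,2)] by blast
    then show "lin_map D (coord_change f g v) (lin_map D (coord_change g f w) y) = y"
      using lin_map_coord_change[OF f g V(1,2) x(1)] lin_map_coord_change[OF g f V(1,3) x(1)]
      by simp
  qed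
  show "\<forall>y\<in>Rn D. lin_map D (coord_change g f w) (lin_map D (coord_change f g v) y) = y"
  proof
    fix y assume "y \<in> Rn D"
    then obtain x where x: "(\<Sum>u\<in>V. x u) = 0" "coords g D x = y"
      using coords_surj_sum_zero[OF g V(1,3)] by blast
    then show "lin_map D (coord_change g f w) (lin_map D (coord_change f g v) y) = y"
      using lin_map_coord_change[OF f g V(1,2) x(1)] lin_map_coord_change[OF g f V(1,3) x(1)]
      by simp
  qed
qed

section \<open>Extreme points and Fano polytopes\<close>

lemma extreme_point_of_convex_hull_if_unique_max:
  fixes S :: "'a::real_vector set" and \<phi> :: "'a \<Rightarrow> real"
  assumes "finite S" "p \<in> S" "linear \<phi>" and max: "\<And>g. g \<in> S \<Longrightarrow> g \<noteq> p \<Longrightarrow> \<phi> g < \<phi> p"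
  shows "p extreme_point_of (convex hull S)"
proof -
  have "S - {p} \<subseteq> \<phi> -` {..<\<phi> p}" using max by auto
  moreover have "convex (\<phi> -` {..<\<phi> p})" by (rule convex_linear_vimage[OF assms(3)]) simp
  ultimately have "convex hull (S - {p}) \<subseteq> \<phi> -` {..<\<phi> p}" by (rule hull_minimal)
  then have "p \<notin> convex hull (S - {p})" by auto
  then show ?thesis
    using extreme_point_of_convex_hull_insert[of "S - {p}" p] assms(1,2) by (simp add: insert_absorb)
qed

lemma extreme_point_of_linear_image:
  assumes "x extreme_point_of S" "linear f" "inj_on f S" "convex S"
  shows "f x extreme_point_of (f ` S)"
  unfolding extreme_point_of_def
proof (intro conjI ballI)
  have xS: "x \<in> S" using assms(1) by (simp add: extreme_point_of_def)
  then show "f x \<in> f ` S" by simp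
  fix fa fb assume "fa \<in> f ` S" "fb \<in> f ` S"
  then obtain a b where ab: "a \<in> S" "b \<in> S" "fa = f a" "fb = f b" by blast
  show "f x \<notin> open_segment fa fb"
  proof
    assume "f x \<in> open_segment fa fb"
    then obtain y where y: "y \<in> closed_segment a b" "f x = f y" "f x \<noteq> f a" "f x \<noteq> f b"
      unfolding ab open_segment_def closed_segment_linear_image[OF assms(2)] by blast
    have "y \<in> S" using y(1) closed_segment_subset[OF ab(1,2) assms(4)] by blast
    then have "x = y" using inj_onD[OF assms(3) y(2) xS] by blast
    then have "x \<in> open_segment a b" using y by (auto simp: open_segment_def)
    then show False using assms(1) ab by (auto simp: extreme_point_of_def)
  qed
qed

lemma scaled_mem_if_reachable:
  fixes e :: "'x \<Rightarrow> 'a::real_vector"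
  assumes "convex P" "e r = 0" and edge: "\<And>a b. R a b \<Longrightarrow> e b - e a \<in> P"
    and "R\<^sup>*\<^sup>* r u" "u \<noteq> r"
  shows "\<exists>t>0. t *\<^sub>R e u \<in> P"
proof -
  have "u = r \<or> (\<exists>t>0. t *\<^sub>R e u \<in> P)"
    using assms(4)
  proof (induction rule: rtranclp_induct)
    case (step a b)
    have ab: "e b - e a \<in> P" using edge[OF step(2)] .
    from step(3) show ?case
    proof
      assume "a = r"
      then show ?thesis using ab assms(2) by (intro disjI2 exI[of _ 1]) simp
    next
      assume "\<exists>t>0. t *\<^sub>R e a \<in> P"
      then obtain t where t: "t > 0" "t *\<^sub>R e a \<in> P" by blast
      have "(t / (1 + t)) *\<^sub>R e b = (1 / (1 + t)) *\<^sub>R (t *\<^sub>R e a) + (t / (1 + t)) *\<^sub>R (e b - e a)"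
        using t(1) by (simp add: field_simps scaleR_diff_right)
      also have "\<dots> \<in> P"
        using t by (intro convexD[OF assms(1) t(2) ab]) (auto simp: field_simps)
      finally show ?thesis using t(1) by (intro disjI2 exI[of _ "t / (1 + t)"]) simp
    qed
  qed simp
  then show ?thesis using assms(5) by blast
qed

lemma zero_mem_if_axes:
  assumes "convex P" "0 < n"
    and axes: "\<And>k. k < n \<Longrightarrow> \<exists>t>0. t *\<^sub>R basis_vec k \<in> P \<and> (- t) *\<^sub>R basis_vec k \<in> P"
  shows "0 \<in> P"
proof -
  obtain t where t: "t *\<^sub>R basis_vec 0 \<in> P" "(- t) *\<^sub>R basis_vec 0 \<in> P"
    using axes[OF assms(2)] by blast
  have "(1/2::real) *\<^sub>R (t *\<^sub>R basis_vec 0) + (1/2::real) *\<^sub>R ((- t) *\<^sub>R basis_vec 0) \<in> P"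
    by (rule convexD[OF assms(1) t]) auto
  then show ?thesis by (simp add: scaleR_add_left[symmetric])
qed

lemma convex_sum_le_one:
  fixes S :: "'a::real_vector set"
  assumes "convex S" "0 \<in> S" "finite I" "\<And>i. i \<in> I \<Longrightarrow> w i \<ge> 0" "sum w I \<le> 1"
    "\<And>i. i \<in> I \<Longrightarrow> q i \<in> S"
  shows "(\<Sum>i\<in>I. w i *\<^sub>R q i) \<in> S"
proof (cases "sum w I = 0")
  case True
  then have "\<forall>i\<in>I. w i = 0" using sum_nonneg_eq_0_iff[OF assms(3)] assms(4) by blast
  then show ?thesis using assms(2) by simp
next
  case False
  define s where "s = sum w I"
  have s0: "s > 0" using False assms(4) s_def sum_nonneg[of I w] by force
  have z: "(\<Sum>i\<in>I. (w i / s) *\<^sub>R q i) \<in> S"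
    by (rule convex_sum[OF assms(3,1)]) (use s0 assms in \<open>auto simp: s_def sum_divide_distrib[symmetric]\<close>)
  have "(\<Sum>i\<in>I. w i *\<^sub>R q i) = s *\<^sub>R (\<Sum>i\<in>I. (w i / s) *\<^sub>R q i) + (1 - s) *\<^sub>R 0"
    using s0 by (simp add: scaleR_sum_right)
  also have "\<dots> \<in> S"
    by (rule convexD[OF assms(1) z assms(2)]) (use s0 assms(5) in \<open>auto simp: s_def\<close>)
  finally show ?thesis .
qed

lemma sum_basis_vec: "(\<Sum>k<n. c k *\<^sub>R basis_vec k) = (\<lambda>j. if j < n then c j else 0)"
  by (simp add: fun_eq_iff sum_fun_apply basis_vec_def if_distrib cong: if_cong)

lemma zero_in_interior_if_axes:
  assumes "convex P" "0 < n"
    and axes: "\<And>k. k < n \<Longrightarrow> \<exists>t>0. t *\<^sub>R basis_vec k \<in> P \<and> (- t) *\<^sub>R basis_vec k \<in> P"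
  shows "(\<lambda>_. 0) \<in> interior_in n P"
proof -
  have "\<forall>k. \<exists>t. k < n \<longrightarrow> t > 0 \<and> t *\<^sub>R basis_vec k \<in> P \<and> (- t) *\<^sub>R basis_vec k \<in> P"
    using axes by blast
  then obtain t where t: "\<And>k. k < n \<Longrightarrow> t k > 0 \<and> t k *\<^sub>R basis_vec k \<in> P \<and> (- t k) *\<^sub>R basis_vec k \<in> P"
    by metis
  have tpos: "t k > 0" if "k < n" for k using t[OF that] by blast
  (* y is the combination of the points \<plusminus>t k *\<^sub>R basis_vec k with weights |y k| / t k,
     whose sum is at most 1 on the box of radius \<delta> *)
  define \<delta> where "\<delta> = 1 / (1 + (\<Sum>k<n. 1 / t k))"
  have S0: "(\<Sum>k<n. 1 / t k) \<ge> 0" using t by (intro sum_nonneg) (simp add: less_imp_le)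
  then have \<delta>: "\<delta> > 0" by (simp add: \<delta>_def)
  have "y \<in> P" if y: "y \<in> Rn n" "\<forall>k<n. \<bar>y k\<bar> < \<delta>" for y
  proof -
    define w where "w k = \<bar>y k\<bar> / t k" for k
    define q where "q k = (if y k \<ge> 0 then t k else - t k) *\<^sub>R basis_vec k" for k
    have "sum w {..<n} \<le> (\<Sum>k<n. \<delta> / t k)"
      using y(2) t unfolding w_def by (intro sum_mono divide_right_mono) (auto simp: less_imp_le)
    also have "\<dots> = \<delta> * (\<Sum>k<n. 1 / t k)" by (simp add: sum_distrib_left)
    also have "\<dots> \<le> 1" using S0 by (simp add: \<delta>_def)
    finally have wsum: "sum w {..<n} \<le> 1" .
    have "y = (\<Sum>k<n. (w k * (if y k \<ge> 0 then t k else - t k)) *\<^sub>R basis_vec k)"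
      using y(1) unfolding sum_basis_vec by (auto simp: w_def Rn_def fun_eq_iff dest: tpos)
    also have "\<dots> = (\<Sum>k<n. w k *\<^sub>R q k)" by (simp add: q_def)
    also have "\<dots> \<in> P"
    proof (rule convex_sum_le_one[OF assms(1) zero_mem_if_axes[OF assms]])
      show "w k \<ge> 0" if "k \<in> {..<n}" for k using tpos[of k] that by (simp add: w_def)
      show "q k \<in> P" if "k \<in> {..<n}" for k using t that by (simp add: q_def)
    qed (use wsum in simp_all)
    finally show ?thesis .
  qed
  then show ?thesis using \<delta> unfolding interior_in_def by (auto simp: Rn_def)
qed

lemma affine_hull_eq_Rn_if_axes:
  assumes "P \<subseteq> Rn n" "0 \<in> P" and axes: "\<And>k. k < n \<Longrightarrow> \<exists>t>0. t *\<^sub>R basis_vec k \<in> P"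
  shows "affine hull P = Rn n"
proof
  show "affine hull P \<subseteq> Rn n"
    using assms(1) subspace_imp_affine[OF subspace_Rn] by (rule hull_minimal)
  show "Rn n \<subseteq> affine hull P"
  proof
    fix y assume y: "y \<in> Rn n"
    have "basis_vec k \<in> span P" if k: "k < n" for k
    proof -
      obtain t where "t > 0" "t *\<^sub>R basis_vec k \<in> P" using axes[OF k] by blast
      then have "(1 / t) *\<^sub>R (t *\<^sub>R basis_vec k) \<in> span P" by (intro span_scale span_base)
      then show ?thesis using \<open>t > 0\<close> by simp
    qed
    then have "(\<Sum>k<n. y k *\<^sub>R basis_vec k) \<in> span P" by (intro span_sum span_scale) auto
    moreover have "(\<Sum>k<n. y k *\<^sub>R basis_vec k) = y"
      using y unfolding sum_basis_vec by (auto simp: Rn_def fun_eq_iff)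
    ultimately show "y \<in> affine hull P" using affine_hull_span_0[OF hull_inc[OF assms(2)]] by simp
  qed
qed

text \<open>For y in the interior with a nonzero coordinate k0, sum the coordinates on which y has the sign
  of y k0: this linear form is at most 1 on the polytope, at least 1 at the integer point y, and
  still grows when y is pushed along coordinate k0.\<close>
lemma interior_lattice_point_eq_0:
  assumes bound: "\<And>g K. g \<in> G \<Longrightarrow> K \<subseteq> {..<n} \<Longrightarrow> \<bar>\<Sum>k\<in>K. g k\<bar> \<le> 1"
    and y: "y \<in> Zn n" "y \<in> interior_in n (convex hull G)"
  shows "y = (\<lambda>_. 0)"
proof (rule ccontr)
  assume "y \<noteq> (\<lambda>_. 0)"
  then obtain k0 where "y k0 \<noteq> 0" by (auto simp: fun_eq_iff)
  moreover from this have "k0 < n" using y(1) by (simp add: Zn_def Rn_def) (meson not_le)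
  ultimately have k0: "k0 < n" "y k0 \<noteq> 0" by blast+
  define \<sigma> where "\<sigma> = sgn (y k0)"
  have \<sigma>: "\<bar>\<sigma>\<bar> = 1" "\<sigma> * \<sigma> = 1" using k0(2) by (auto simp: \<sigma>_def sgn_if)
  define K where "K = {k. k < n \<and> \<sigma> * y k > 0}"
  define f where "f z = \<sigma> * (\<Sum>k\<in>K. z k)" for z :: "nat \<Rightarrow> real"
  have K: "finite K" "K \<subseteq> {..<n}" "k0 \<in> K"
    using k0 by (auto simp: K_def \<sigma>_def sgn_if)
  have "linear f"
    by (rule linearI) (simp_all add: f_def sum.distrib sum_distrib_left algebra_simps)
  have "f g \<le> 1" if "g \<in> G" for g
  proof -
    have "\<bar>f g\<bar> \<le> 1" using bound[OF that K(2)] \<sigma>(1) by (simp add: f_def abs_mult)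
    then show ?thesis by simp
  qed
  then have "G \<subseteq> f -` {..1}" by auto
  moreover have "convex (f -` {..1})" by (rule convex_linear_vimage[OF \<open>linear f\<close>]) simp
  ultimately have f_le: "convex hull G \<subseteq> f -` {..1}" by (rule hull_minimal)
  have "1 \<le> \<bar>y k0\<bar>" using y(1) k0 by (intro Ints_nonzero_abs_ge1) (auto simp: Zn_def)
  also have "\<bar>y k0\<bar> = \<sigma> * y k0" by (simp add: \<sigma>_def sgn_if)
  also have "\<dots> \<le> (\<Sum>k\<in>K. \<sigma> * y k)"
    by (rule member_le_sum[OF K(3) _ K(1)]) (auto simp: K_def)
  finally have fy: "1 \<le> f y" by (simp add: f_def sum_distrib_left)
  obtain e where e: "e > 0" "\<forall>z\<in>Rn n. (\<forall>k<n. \<bar>z k - y k\<bar> < e) \<longrightarrow> z \<in> convex hull G"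
    using y(2) unfolding interior_in_def by blast
  define z where "z = y + (\<sigma> * e / 2) *\<^sub>R basis_vec k0"
  have "z \<in> Rn n" using y(1) k0 by (auto simp: Rn_def Zn_def z_def basis_vec_def)
  moreover have "\<bar>z k - y k\<bar> < e" for k using e(1) \<sigma>(1) by (simp add: z_def basis_vec_def abs_mult)
  ultimately have "z \<in> convex hull G" using e(2) by blast
  then have "f z \<le> 1" using f_le by auto
  moreover have "f (basis_vec k0) = \<sigma>" using K by (simp add: f_def basis_vec_def)
  then have "f z = f y + e / 2"
    using \<sigma>(2) by (simp add: z_def linear_add[OF \<open>linear f\<close>] linear_scale[OF \<open>linear f\<close>])
  ultimately show False using fy e(1) by simp
qed

lemma neg_mem_convex_hull_if_symmetric:
  assumes "\<And>g. g \<in> G \<Longrightarrow> - g \<in> G" "x \<in> convex hull G"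
  shows "- x \<in> convex hull G"
proof -
  have "(\<lambda>x. (-1) *\<^sub>R x) ` G \<subseteq> G" using assms(1) by auto
  then have "convex hull ((\<lambda>x. (-1) *\<^sub>R x) ` G) \<subseteq> convex hull G" by (rule hull_mono)
  then show ?thesis using assms(2) unfolding convex_hull_scaling by auto
qed

lemma fano_convex_hullI:
  fixes G :: "(nat \<Rightarrow> real) set"
  assumes "finite G" "G \<subseteq> Zn n" "0 < n" and symmetric: "\<And>g. g \<in> G \<Longrightarrow> - g \<in> G"
    and axes: "\<And>k. k < n \<Longrightarrow> \<exists>t>0. t *\<^sub>R basis_vec k \<in> convex hull G"
    and bound: "\<And>g K. g \<in> G \<Longrightarrow> K \<subseteq> {..<n} \<Longrightarrow> \<bar>\<Sum>k\<in>K. g k\<bar> \<le> 1"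
  shows "fano n (conv G)"
proof -
  have axes_pm: "\<exists>t>0. t *\<^sub>R basis_vec k \<in> convex hull G \<and> (- t) *\<^sub>R basis_vec k \<in> convex hull G"
    if "k < n" for k
    using axes[OF that] neg_mem_convex_hull_if_symmetric[OF symmetric] by fastforce
  have "G \<subseteq> Rn n" using assms(2) by (auto simp: Zn_def)
  then have "convex hull G \<subseteq> Rn n"
    using subspace_imp_convex[OF subspace_Rn] by (rule hull_minimal)
  moreover have "0 \<in> convex hull G" by (rule zero_mem_if_axes[OF _ assms(3) axes_pm]) simp
  ultimately have affine: "affine hull (convex hull G) = Rn n"
    by (rule affine_hull_eq_Rn_if_axes) (use axes in blast)
  have "(\<lambda>_. 0) \<in> interior_in n (convex hull G)"
    by (rule zero_in_interior_if_axes[OF _ assms(3) axes_pm]) simp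
  moreover have "(\<lambda>_. 0) \<in> Zn n" by (simp add: Zn_def Rn_def)
  ultimately have lattice: "Zn n \<inter> interior_in n (convex hull G) = {\<lambda>_. 0}"
    using interior_lattice_point_eq_0[OF bound] by blast
  show ?thesis
    unfolding fano_def integral_polytope_def full_dimensional_def
      conv_eq_convex_hull aff_hull_eq_affine_hull
    using assms(1,2) affine lattice by blast
qed

lemma fano_subset_Rn:
  assumes "fano D P"
  shows "P \<subseteq> Rn D"
proof -
  obtain V where "V \<subseteq> Zn D" "P = convex hull V"
    using assms unfolding fano_def integral_polytope_def conv_eq_convex_hull by blast
  then show ?thesis
    using hull_minimal[of V "Rn D" convex] subspace_imp_convex[OF subspace_Rn] by (auto simp: Zn_def)
qed

lemma fano_nonzero_first_coord:
  assumes "fano D P" "0 < D"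
  shows "\<exists>z\<in>P. z 0 \<noteq> 0"
proof -
  have "(\<lambda>_. 0) \<in> interior_in D P" using assms(1) unfolding fano_def by blast
  then obtain e where e: "e > 0" "\<forall>z\<in>Rn D. (\<forall>k<D. \<bar>z k\<bar> < e) \<longrightarrow> z \<in> P"
    unfolding interior_in_def by auto
  have "(e / 2) *\<^sub>R basis_vec 0 \<in> Rn D" using assms(2) by (simp add: Rn_def basis_vec_def)
  then have "(e / 2) *\<^sub>R basis_vec 0 \<in> P" using e by (auto simp: basis_vec_def)
  then show ?thesis using e(1) by (intro bexI) (auto simp: basis_vec_def)
qed

section \<open>Graphs and edge vectors\<close>

definition adj_in :: "nat set \<Rightarrow> nat set set \<Rightarrow> nat \<Rightarrow> nat \<Rightarrow> bool" where
  "adj_in V E a b \<longleftrightarrow> a \<in> V \<and> b \<in> V \<and> {a, b} \<in> E"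

lemma connected_on_iff_adj_in: "connected_on V E \<longleftrightarrow> (\<forall>u\<in>V. \<forall>v\<in>V. (adj_in V E)\<^sup>*\<^sup>* u v)"
  by (simp add: connected_on_def adj_in_def[abs_def])

lemma symp_adj_in: "symp (adj_in V E)"
  by (auto simp: symp_def adj_in_def insert_commute)

lemma adj_in_rtranclp_sym: "(adj_in V E)\<^sup>*\<^sup>* a b \<Longrightarrow> (adj_in V E)\<^sup>*\<^sup>* b a"
  using sympD[OF symp_rtranclp[OF symp_adj_in]] .

lemma adj_in_rtranclp_mem: "(adj_in V E)\<^sup>*\<^sup>* a b \<Longrightarrow> a \<in> V \<Longrightarrow> b \<in> V"
  by (induction rule: rtranclp_induct) (auto simp: adj_in_def)

lemma simple_graph_edgeD:
  "simple_graph d E \<Longrightarrow> {i, j} \<in> E \<Longrightarrow> i \<in> {1..d} \<and> j \<in> {1..d} \<and> i \<noteq> j"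
  unfolding simple_graph_def by (fastforce simp: doubleton_eq_iff)

lemma sigma_eq_basis_vec_diff: "sigma i j = basis_vec i - basis_vec j"
  by (simp add: sigma_def basis_vec_def fun_eq_iff)

lemma sigma_swap: "sigma j i = - sigma i j"
  by (simp add: sigma_def fun_eq_iff)

lemma sigma_add_sigma: "sigma i j + sigma j k = sigma i k"
  by (simp add: sigma_def fun_eq_iff)

lemma sum_sigma_eq_0: "finite V \<Longrightarrow> i \<in> V \<Longrightarrow> j \<in> V \<Longrightarrow> (\<Sum>u\<in>V. sigma i j u) = 0"
  by (simp add: sigma_def sum_subtractf)

definition edge_vectors :: "nat set set \<Rightarrow> nat set \<Rightarrow> (nat \<Rightarrow> real) set" where
  "edge_vectors E S = {sigma i j | i j. {i, j} \<in> E \<and> i \<in> S \<and> j \<in> S}"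

lemma finite_edge_vectors: "finite S \<Longrightarrow> finite (edge_vectors E S)"
proof -
  assume "finite S"
  moreover have "edge_vectors E S \<subseteq> (\<lambda>(i, j). sigma i j) ` (S \<times> S)"
    by (auto simp: edge_vectors_def)
  ultimately show ?thesis by (meson finite_SigmaI finite_imageI finite_subset)
qed

lemma neg_mem_edge_vectors:
  assumes "g \<in> edge_vectors E S"
  shows "- g \<in> edge_vectors E S"
proof -
  obtain i j where "{i, j} \<in> E" "i \<in> S" "j \<in> S" "g = sigma i j"
    using assms unfolding edge_vectors_def by blast
  then have "{j, i} \<in> E" "j \<in> S" "i \<in> S" "- g = sigma j i"
    by (simp_all add: insert_commute sigma_swap[of i j])
  then show ?thesis unfolding edge_vectors_def by blast
qed

lemma sym_edge_polytope_eq: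
  assumes "simple_graph d E"
  shows "sym_edge_polytope d E = convex hull (phi_inv d ` edge_vectors E {1..d})"
proof -
  have "{phi_inv d (\<lambda>k. s * sigma i j k) | s i j. s \<in> {1, -1} \<and> {i, j} \<in> E}
        = phi_inv d ` edge_vectors E {1..d}" (is "?A = ?B")
  proof
    show "?A \<subseteq> ?B"
    proof
      fix x assume "x \<in> ?A"
      then obtain s i j where sij: "s \<in> {1, -1}" "{i, j} \<in> E"
        and x: "x = phi_inv d (\<lambda>k. s * sigma i j k)" by blast
      have ij: "i \<in> {1..d}" "j \<in> {1..d}" using simple_graph_edgeD[OF assms sij(2)] by auto
      show "x \<in> ?B"
      proof (cases "s = 1")
        case True
        then have "x = phi_inv d (sigma i j)" using x by (simp add: fun_eq_iff)
        then show ?thesis using sij ij by (auto simp: edge_vectors_def)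
      next
        case False
        then have "x = phi_inv d (sigma j i)" using x sij(1) by (simp add: sigma_swap[of i j] fun_eq_iff)
        moreover have "{j, i} \<in> E" using sij(2) by (simp add: insert_commute)
        ultimately show ?thesis using ij by (auto simp: edge_vectors_def)
      qed
    qed
    show "?B \<subseteq> ?A"
    proof
      fix x assume "x \<in> ?B"
      then obtain i j where "{i, j} \<in> E" "x = phi_inv d (\<lambda>k. 1 * sigma i j k)"
        by (auto simp: edge_vectors_def)
      then show "x \<in> ?A" by blast
    qed
  qed
  then show ?thesis unfolding sym_edge_polytope_def conv_eq_convex_hull by simp
qed

lemma coords_basis_vec:
  assumes "inj_on h {..<n}"
  shows "k < n \<Longrightarrow> coords h n (basis_vec (h k)) = basis_vec k"
    and "u \<notin> h ` {..<n} \<Longrightarrow> coords h n (basis_vec u) = 0"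
  using assms by (auto simp: coords_def basis_vec_def fun_eq_iff inj_on_def)

lemma fano_rooted_connected:
  assumes h: "bij_betw h {..<n} X" and "0 < n" and "r \<notin> X"
    and conn: "\<And>u. u \<in> X \<Longrightarrow> (adj_in (insert r X) E)\<^sup>*\<^sup>* r u"
  shows "fano n (conv (coords h n ` edge_vectors E (insert r X)))"
proof (rule fano_convex_hullI)
  let ?G = "coords h n ` edge_vectors E (insert r X)"
  define e where "e u = coords h n (basis_vec u)" for u
  have inj: "inj_on h {..<n}" and X: "X = h ` {..<n}" using h by (auto simp: bij_betw_def)
  have G: "g \<in> ?G \<longleftrightarrow> (\<exists>i j. {i, j} \<in> E \<and> i \<in> insert r X \<and> j \<in> insert r X \<and> g = e i - e j)"
    for g
    unfolding edge_vectors_def e_def linear_diff[OF linear_coords, symmetric] sigma_eq_basis_vec_diff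
    by blast
  show "finite ?G" using bij_betw_finite[OF h] by (simp add: finite_edge_vectors)
  show "?G \<subseteq> Zn n"
    using coords_in_Rn by (auto simp: edge_vectors_def Zn_def coords_def sigma_def)
  show "- g \<in> ?G" if g: "g \<in> ?G" for g
  proof -
    obtain x where "x \<in> edge_vectors E (insert r X)" "g = coords h n x" using g by blast
    then have "- g = coords h n (- x)" "- x \<in> edge_vectors E (insert r X)"
      using neg_mem_edge_vectors linear_neg[OF linear_coords, of h n x] by auto
    then show ?thesis by (rule image_eqI)
  qed
  show "\<exists>t>0. t *\<^sub>R basis_vec k \<in> convex hull ?G" if "k < n" for k
  proof -
    have "e r = 0" using \<open>r \<notin> X\<close> X coords_basis_vec(2)[OF inj] by (simp add: e_def)
    moreover have "e b - e a \<in> convex hull ?G" if "adj_in (insert r X) E a b" for a b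
    proof (rule hull_inc)
      have "{b, a} \<in> E" "b \<in> insert r X" "a \<in> insert r X"
        using that by (auto simp: adj_in_def insert_commute)
      then show "e b - e a \<in> ?G" unfolding G by blast
    qed
    moreover have "h k \<noteq> r" "h k \<in> X" using \<open>r \<notin> X\<close> X \<open>k < n\<close> by auto
    ultimately obtain t where "t > 0" "t *\<^sub>R e (h k) \<in> convex hull ?G"
      using scaled_mem_if_reachable[OF convex_convex_hull, of e r] conn by blast
    then show ?thesis using coords_basis_vec(1)[OF inj \<open>k < n\<close>] by (auto simp: e_def)
  qed
  show "\<bar>\<Sum>k\<in>K. g k\<bar> \<le> 1" if g: "g \<in> ?G" and K: "K \<subseteq> {..<n}" for g K
  proof -
    have sum_e: "(\<Sum>k\<in>K. e u k) \<in> {0, 1}" for u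
    proof (cases "u \<in> X")
      case True
      then obtain k1 where "k1 < n" "u = h k1" using X by auto
      then show ?thesis
        using coords_basis_vec(1)[OF inj] finite_subset[OF K]
        by (simp add: e_def basis_vec_def)
    qed (use X coords_basis_vec(2)[OF inj] in \<open>simp add: e_def\<close>)
    obtain i j where "g = e i - e j" using g G by blast
    then have "(\<Sum>k\<in>K. g k) = (\<Sum>k\<in>K. e i k) - (\<Sum>k\<in>K. e j k)" by (simp add: sum_subtractf)
    then show ?thesis using sum_e[of i] sum_e[of j] by auto
  qed
qed (use assms in simp)

section \<open>Splitting at a cut vertex\<close>

lemma reachable_from_cut_vertex:
  assumes conn: "connected_on V E" and v: "v \<in> V" and X: "X \<subseteq> V - {v}"
    and closed: "\<And>x y. {x, y} \<in> E \<Longrightarrow> x \<in> X \<Longrightarrow> y \<in> insert v X"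
    and u: "u \<in> X"
  shows "(adj_in (insert v X) E)\<^sup>*\<^sup>* v u"
proof -
  let ?R = "adj_in (insert v X) E"
  have "(adj_in V E)\<^sup>*\<^sup>* u v" using conn u X v unfolding connected_on_iff_adj_in by blast
  moreover have "?R\<^sup>*\<^sup>* u y \<or> ?R\<^sup>*\<^sup>* u v" if "(adj_in V E)\<^sup>*\<^sup>* u y" for y
    using that
  proof (induction rule: rtranclp_induct)
    case (step y z)
    from step(3) show ?case
    proof
      assume uy: "?R\<^sup>*\<^sup>* u y"
      then have "y \<in> insert v X" using adj_in_rtranclp_mem u by blast
      moreover have "{y, z} \<in> E" using step(2) by (simp add: adj_in_def)
      ultimately have "y = v \<or> ?R y z" using closed by (auto simp: adj_in_def)
      then show ?case using uy by (meson rtranclp.rtrancl_into_rtrancl)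
    qed simp
  qed simp
  ultimately have "?R\<^sup>*\<^sup>* u v" by blast
  then show ?thesis by (rule adj_in_rtranclp_sym)
qed

lemma cut_vertex_partition:
  assumes sg: "simple_graph d E" and "graph_connected d E" "\<not> two_connected d E"
  obtains v C B where "v \<in> {1..d}" "C \<noteq> {}" "B \<noteq> {}" "C \<inter> B = {}" "C \<union> B = {1..d} - {v}"
    and "\<And>x y. {x, y} \<in> E \<Longrightarrow> x \<in> C \<Longrightarrow> y \<in> insert v C"
    and "\<And>x y. {x, y} \<in> E \<Longrightarrow> x \<in> B \<Longrightarrow> y \<in> insert v B"
proof -
  obtain v where v: "v \<in> {1..d}" and "\<not> connected_on ({1..d} - {v}) E"
    using assms(2,3) unfolding two_connected_def by blast
  then obtain a b where ab: "a \<in> {1..d} - {v}" "b \<in> {1..d} - {v}"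
    and not_ab: "\<not> (adj_in ({1..d} - {v}) E)\<^sup>*\<^sup>* a b"
    unfolding connected_on_iff_adj_in by blast
  define C where "C = {x \<in> {1..d} - {v}. (adj_in ({1..d} - {v}) E)\<^sup>*\<^sup>* a x}"
  define B where "B = {1..d} - {v} - C"
  have closed_C: "y \<in> insert v C" if "{x, y} \<in> E" "x \<in> C" for x y
  proof (cases "y = v")
    case False
    then have "adj_in ({1..d} - {v}) E x y"
      using that simple_graph_edgeD[OF sg that(1)] by (auto simp: adj_in_def C_def)
    then show ?thesis
      using that(2) simple_graph_edgeD[OF sg that(1)] False
      by (auto simp: C_def intro: rtranclp.rtrancl_into_rtrancl)
  qed simp
  have closed_B: "y \<in> insert v B" if "{x, y} \<in> E" "x \<in> B" for x y
  proof -
    have "{y, x} \<in> E" using that(1) by (simp add: insert_commute)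
    then have "y \<notin> C" using closed_C that(2) by (auto simp: B_def)
    then show ?thesis using simple_graph_edgeD[OF sg that(1)] by (auto simp: B_def)
  qed
  have "a \<in> C" "b \<in> B" using ab not_ab by (auto simp: C_def B_def)
  moreover have "C \<inter> B = {}" "C \<union> B = {1..d} - {v}" by (auto simp: C_def B_def)
  ultimately show ?thesis using that v closed_C closed_B by blast
qed

lemma bij_betw_append:
  fixes D1 D2 :: nat
  assumes h1: "bij_betw h1 {..<D1} C" and h2: "bij_betw h2 {..<D2} B" and "C \<inter> B = {}"
  shows "bij_betw (\<lambda>k. if k < D1 then h1 k else h2 (k - D1)) {..<D1 + D2} (C \<union> B)"
    (is "bij_betw ?h _ _")
proof -
  have "bij_betw (\<lambda>k. k - D1) {D1..<D1 + D2} {..<D2}"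
    by (rule bij_betw_byWitness[where f' = "\<lambda>k. k + D1"]) auto
  then have "bij_betw (h2 \<circ> (\<lambda>k. k - D1)) {D1..<D1 + D2} B" using h2 by (rule bij_betw_trans)
  then have "bij_betw ?h {D1..<D1 + D2} B"
    using bij_betw_cong[of "{D1..<D1 + D2}" ?h "h2 \<circ> (\<lambda>k. k - D1)" B] by simp
  moreover have "bij_betw ?h {..<D1} C" using h1 bij_betw_cong[of "{..<D1}" ?h h1 C] by simp
  ultimately have "bij_betw ?h ({..<D1} \<union> {D1..<D1 + D2}) (C \<union> B)"
    using bij_betw_combine assms(3) by blast
  moreover have "{..<D1} \<union> {D1..<D1 + D2} = {..<D1 + D2}" by auto
  ultimately show ?thesis by simp
qed

lemma coords_append_left:
  assumes "\<And>k. k < D2 \<Longrightarrow> x (h2 k) = 0"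
  shows "coords (\<lambda>k. if k < D1 then h1 k else h2 (k - D1)) (D1 + D2) x = coords h1 D1 x"
  using assms by (auto simp: coords_def fun_eq_iff)

lemma coords_append_right:
  assumes "\<And>k. k < D1 \<Longrightarrow> x (h1 k) = 0"
  shows "coords (\<lambda>k. if k < D1 then h1 k else h2 (k - D1)) (D1 + D2) x = shift_by D1 (coords h2 D2 x)"
  using assms by (auto simp: coords_def shift_by_def fun_eq_iff)

lemma linear_shift_by: "linear (shift_by D1)"
  by (rule linearI) (auto simp: shift_by_def fun_eq_iff)

lemma edge_vectors_vanish: "g \<in> edge_vectors E S \<Longrightarrow> u \<notin> S \<Longrightarrow> g u = 0"
  by (auto simp: edge_vectors_def sigma_def)

lemma edge_vectors_mono: "S \<subseteq> T \<Longrightarrow> edge_vectors E S \<subseteq> edge_vectors E T"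
  by (auto simp: edge_vectors_def)

lemma edge_vectors_split:
  assumes "\<And>i j. {i, j} \<in> E \<Longrightarrow> {i, j} \<subseteq> A \<or> {i, j} \<subseteq> B" "A \<subseteq> S" "B \<subseteq> S"
  shows "edge_vectors E S = edge_vectors E A \<union> edge_vectors E B"
proof
  show "edge_vectors E S \<subseteq> edge_vectors E A \<union> edge_vectors E B"
  proof
    fix g assume "g \<in> edge_vectors E S"
    then obtain i j where "{i, j} \<in> E" "g = sigma i j" unfolding edge_vectors_def by blast
    then show "g \<in> edge_vectors E A \<union> edge_vectors E B"
      using assms(1) unfolding edge_vectors_def by blast
  qed
  show "edge_vectors E A \<union> edge_vectors E B \<subseteq> edge_vectors E S"
    using edge_vectors_mono assms(2,3) by blast
qed

lemma edge_vectors_sum_eq_0: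
  "g \<in> edge_vectors E S \<Longrightarrow> S \<subseteq> V \<Longrightarrow> finite V \<Longrightarrow> (\<Sum>u\<in>V. g u) = 0"
  by (auto simp: edge_vectors_def intro!: sum_sigma_eq_0)

lemma splits_if_not_two_connected:
  assumes d: "d \<ge> 2" and sg: "simple_graph d E" and conn: "graph_connected d E"
    and "\<not> two_connected d E"
  shows "splits (d - 1) (sym_edge_polytope d E)"
proof -
  obtain v C B where v: "v \<in> {1..d}"
    and CB: "C \<noteq> {}" "B \<noteq> {}" "C \<inter> B = {}" "C \<union> B = {1..d} - {v}"
    and closed_C: "\<And>x y. {x, y} \<in> E \<Longrightarrow> x \<in> C \<Longrightarrow> y \<in> insert v C"
    and closed_B: "\<And>x y. {x, y} \<in> E \<Longrightarrow> x \<in> B \<Longrightarrow> y \<in> insert v B"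
    using cut_vertex_partition[OF sg conn assms(4)] by blast
  have CB_sub: "C \<subseteq> {1..d} - {v}" "B \<subseteq> {1..d} - {v}" using CB(4) by auto
  then have fin: "finite C" "finite B" by (auto intro: finite_subset)
  define D1 D2 where "D1 = card C" and "D2 = card B"
  obtain h1 where h1: "bij_betw h1 {..<D1} C"
    using ex_bij_betw_nat_finite[OF fin(1)] by (auto simp: D1_def atLeast0LessThan)
  obtain h2 where h2: "bij_betw h2 {..<D2} B"
    using ex_bij_betw_nat_finite[OF fin(2)] by (auto simp: D2_def atLeast0LessThan)
  define h where "h k = (if k < D1 then h1 k else h2 (k - D1))" for k
  have D: "D1 + D2 = d - 1"
    using card_Un_disjoint[OF fin CB(3)] CB(4) v by (simp add: D1_def D2_def)
  have h: "bij_betw h {..<d - 1} ({1..d} - {v})"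
    using bij_betw_append[OF h1 h2 CB(3)] CB(4) D unfolding h_def by simp
  define U where "U = coord_change h Suc d"
  have U: "unimodular (d - 1) U"
    unfolding U_def using d v by (intro unimodular_coord_change[OF bij_betw_Suc_vertices h]) auto
  define G1 where "G1 = coords h1 D1 ` edge_vectors E (insert v C)"
  define G2 where "G2 = coords h2 D2 ` edge_vectors E (insert v B)"
  have connV: "connected_on {1..d} E" using conn by (simp add: graph_connected_def)
  have "fano D1 (conv G1)"
    unfolding G1_def using CB(1) fin(1) CB_sub(1) closed_C
    by (intro fano_rooted_connected[OF h1] reachable_from_cut_vertex[OF connV v])
      (auto simp: D1_def card_gt_0_iff)
  moreover have "fano D2 (conv G2)"
    unfolding G2_def using CB(2) fin(2) CB_sub(2) closed_B
    by (intro fano_rooted_connected[OF h2] reachable_from_cut_vertex[OF connV v])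
      (auto simp: D2_def card_gt_0_iff)
  moreover have "D1 \<ge> 1" "D2 \<ge> 1" using CB(1,2) fin by (auto simp: D1_def D2_def card_gt_0_iff Suc_le_eq)
  moreover have "lin_map (d - 1) U ` sym_edge_polytope d E = conv (conv G1 \<union> shift_by D1 ` conv G2)"
  proof -
    have "{i, j} \<subseteq> insert v C \<or> {i, j} \<subseteq> insert v B" if ij: "{i, j} \<in> E" for i j
    proof -
      have ji: "{j, i} \<in> E" using ij by (simp add: insert_commute)
      have V: "i \<in> insert v (C \<union> B)" "j \<in> insert v (C \<union> B)"
        using simple_graph_edgeD[OF sg ij] CB(4) by blast+
      consider "i = v" | "i \<in> C" | "i \<in> B" using V(1) by blast
      then show ?thesis
      proof cases
        case 1
        then show ?thesis using V(2) by blast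
      next
        case 2
        then show ?thesis using closed_C[OF ij] by blast
      next
        case 3
        then show ?thesis using closed_B[OF ij] by blast
      qed
    qed
    then have edges: "edge_vectors E {1..d} = edge_vectors E (insert v C) \<union> edge_vectors E (insert v B)"
      using CB_sub v by (intro edge_vectors_split) auto
    have disjoint: "insert v C \<inter> B = {}" "insert v B \<inter> C = {}" using CB_sub CB(3) by auto
    have to_coords: "lin_map (d - 1) U (phi_inv d g) = coords h (d - 1) g"
      if "g \<in> edge_vectors E {1..d}" for g
      unfolding U_def phi_inv_eq_coords using d v edge_vectors_sum_eq_0[OF that]
      by (intro lin_map_coord_change[OF bij_betw_Suc_vertices h]) auto
    have "coords h (d - 1) g = coords h1 D1 g" if "g \<in> edge_vectors E (insert v C)" for g
      unfolding D[symmetric] h_def using bij_betwE[OF h2] disjoint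
      by (intro coords_append_left edge_vectors_vanish[OF that]) blast
    moreover have "coords h (d - 1) g = shift_by D1 (coords h2 D2 g)"
      if "g \<in> edge_vectors E (insert v B)" for g
      unfolding D[symmetric] h_def using bij_betwE[OF h1] disjoint
      by (intro coords_append_right edge_vectors_vanish[OF that]) blast
    ultimately have "(lin_map (d - 1) U \<circ> phi_inv d) ` edge_vectors E {1..d} = G1 \<union> shift_by D1 ` G2"
      unfolding edges image_Un G1_def G2_def image_image using edges to_coords
      by (intro arg_cong2[where f = "(\<union>)"] image_cong) auto
    then have "lin_map (d - 1) U ` sym_edge_polytope d E = convex hull (G1 \<union> shift_by D1 ` G2)"
      unfolding sym_edge_polytope_eq[OF sg] convex_hull_linear_image[OF linear_lin_map] image_comp
      by simp
    also have "\<dots> = convex hull (convex hull G1 \<union> convex hull (shift_by D1 ` G2))"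
      by (metis hull_Un_left hull_Un_right)
    finally show ?thesis
      unfolding conv_eq_convex_hull convex_hull_linear_image[OF linear_shift_by] .
  qed
  ultimately show ?thesis unfolding splits_def using U D by blast
qed

section \<open>Two-connected graphs do not split\<close>

lemma sigma_extreme_point_of_edge_vectors:
  assumes sg: "simple_graph d E" and ij: "{i, j} \<in> E"
  shows "sigma i j extreme_point_of convex hull (edge_vectors E {1..d})"
proof (rule extreme_point_of_convex_hull_if_unique_max[where \<phi> = "\<lambda>x. x i - x j"])
  have ij': "i \<in> {1..d}" "j \<in> {1..d}" "i \<noteq> j" using simple_graph_edgeD[OF sg ij] by auto
  then show "sigma i j \<in> edge_vectors E {1..d}" using ij by (auto simp: edge_vectors_def)
  show "finite (edge_vectors E {1..d})" by (simp add: finite_edge_vectors)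
  show "linear (\<lambda>x. x i - x j :: real)" by (rule linearI) (auto simp: algebra_simps)
  fix g assume "g \<in> edge_vectors E {1..d}" "g \<noteq> sigma i j"
  then obtain k l where "k \<noteq> l" "g = sigma k l" "(k, l) \<noteq> (i, j)"
    using simple_graph_edgeD[OF sg] unfolding edge_vectors_def by blast
  then show "g i - g j < sigma i j i - sigma i j j"
    using ij'(3) by (auto simp: sigma_def)
qed

lemma two_connected_bicoloured_vertex:
  assumes sg: "simple_graph d E" and tc: "two_connected d E" and sym: "\<And>x y. c x y \<longleftrightarrow> c y x"
    and e1: "{i, j} \<in> E" "c i j" and e2: "{i', j'} \<in> E" "\<not> c i' j'"
  obtains v a b where "{v, a} \<in> E" "c v a" "{v, b} \<in> E" "\<not> c v b"
    "(adj_in ({1..d} - {v}) E)\<^sup>*\<^sup>* a b"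
proof -
  define A1 where "A1 = {x. \<exists>y. {x, y} \<in> E \<and> c x y}"
  define A2 where "A2 = {x. \<exists>y. {x, y} \<in> E \<and> \<not> c x y}"
  have "i \<in> {1..d}" "i' \<in> {1..d}"
    using simple_graph_edgeD[OF sg e1(1)] simple_graph_edgeD[OF sg e2(1)] by auto
  then have path: "(adj_in {1..d} E)\<^sup>*\<^sup>* i i'"
    using tc unfolding two_connected_def graph_connected_def connected_on_iff_adj_in by blast
  have "x \<in> A1 \<or> A1 \<inter> A2 \<noteq> {}" if "(adj_in {1..d} E)\<^sup>*\<^sup>* i x" for x
    using that
  proof (induction rule: rtranclp_induct)
    case base
    then show ?case using e1 by (auto simp: A1_def)
  next
    case (step x y)
    have xy: "{x, y} \<in> E" "{y, x} \<in> E" using step(2) by (auto simp: adj_in_def insert_commute)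
    show ?case
    proof (cases "c x y")
      case True
      then show ?thesis using xy sym by (auto simp: A1_def)
    next
      case False
      then show ?thesis using step(3) xy by (auto simp: A2_def)
    qed
  qed
  moreover have "i' \<in> A2" using e2 by (auto simp: A2_def)
  ultimately obtain v where "v \<in> A1" "v \<in> A2" using path by blast
  then obtain a b where ab: "{v, a} \<in> E" "c v a" "{v, b} \<in> E" "\<not> c v b"
    by (auto simp: A1_def A2_def)
  have "v \<in> {1..d}" "a \<in> {1..d} - {v}" "b \<in> {1..d} - {v}"
    using simple_graph_edgeD[OF sg ab(1)] simple_graph_edgeD[OF sg ab(3)] by auto
  then have "(adj_in ({1..d} - {v}) E)\<^sup>*\<^sup>* a b"
    using tc unfolding two_connected_def connected_on_iff_adj_in by blast
  then show ?thesis using that ab by blast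
qed

lemma sigma_path_decomposition:
  assumes W: "subspace W1" "subspace W2" and edge: "\<And>x y. R x y \<Longrightarrow> sigma x y \<in> W1 \<union> W2"
    and "R\<^sup>*\<^sup>* a b"
  shows "\<exists>u1\<in>W1. \<exists>u2\<in>W2. sigma a b = u1 + u2"
  using assms(4)
proof (induction rule: rtranclp_induct)
  case base
  have "sigma a a = 0 + 0" by (simp add: sigma_def fun_eq_iff)
  then show ?case using subspace_0[OF W(1)] subspace_0[OF W(2)] by blast
next
  case (step y z)
  obtain u1 u2 where u: "u1 \<in> W1" "u2 \<in> W2" "sigma a y = u1 + u2" using step(3) by blast
  have "sigma a z = u1 + u2 + sigma y z" using u(3) sigma_add_sigma[of a y z] by simp
  moreover have "sigma y z \<in> W1 \<or> sigma y z \<in> W2" using edge[OF step(2)] by blast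
  ultimately show ?case
    using u subspace_add[OF W(1)] subspace_add[OF W(2)] by (metis add.assoc add.commute)
qed

lemma not_splits_if_two_connected:
  assumes d: "d \<ge> 2" and sg: "simple_graph d E" and tc: "two_connected d E"
  shows "\<not> splits (d - 1) (sym_edge_polytope d E)"
proof
  assume "splits (d - 1) (sym_edge_polytope d E)"
  then obtain U D1 D2 P1 P2 where U: "unimodular (d - 1) U" and D: "D1 \<ge> 1" "D2 \<ge> 1"
    and fano: "fano D1 P1" "fano D2 P2"
    and img: "lin_map (d - 1) U ` sym_edge_polytope d E = conv (P1 \<union> shift_by D1 ` P2)"
    unfolding splits_def by blast
  define M where "M = lin_map (d - 1) U \<circ> phi_inv d"
  define H :: "(nat \<Rightarrow> real) set"
    where "H = {x. (\<Sum>u\<in>{1..d}. x u) = 0 \<and> (\<forall>u. u \<notin> {1..d} \<longrightarrow> x u = 0)}"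
  define W1 where "W1 = {x. \<forall>k\<ge>D1. M x k = 0}"
  define W2 where "W2 = {x. \<forall>k<D1. M x k = 0}"
  have linM: "linear M" unfolding M_def phi_inv_eq_coords
    by (intro linear_compose linear_coords linear_lin_map)
  have subspaces: "subspace H" "subspace W1" "subspace W2"
    unfolding subspace_def H_def W1_def W2_def
    by (simp_all add: sum.distrib sum_distrib_left[symmetric] linear_0[OF linM]
        linear_add[OF linM] linear_scale[OF linM])
  have kernel: "x = 0" if "x \<in> H" "M x = 0" for x
  proof -
    have "lin_map (d - 1) U (phi_inv d x) = lin_map (d - 1) U 0"
      using that(2) linear_0[OF linear_lin_map] by (simp add: M_def)
    then have "coords Suc (d - 1) x = 0"
      using inj_on_lin_map_unimodular[OF U] coords_in_Rn subspace_0[OF subspace_Rn]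
      by (auto simp: phi_inv_eq_coords dest: inj_onD)
    then have "x u = 0" if "u \<in> {1..d}" for u
      using coords_eq_0_imp_vanish[OF bij_betw_Suc_vertices _ _ _ _ that] \<open>x \<in> H\<close> d
      by (auto simp: H_def)
    then show ?thesis using \<open>x \<in> H\<close> by (auto simp: H_def fun_eq_iff)
  qed
  then have injM: "inj_on M H" using linear_inj_on_iff_eq_0[OF linM subspaces(1)] by blast
  have EV_H: "edge_vectors E {1..d} \<subseteq> H"
    using edge_vectors_sum_eq_0 edge_vectors_vanish by (auto simp: H_def)
  have sigma_H: "sigma i j \<in> H" if "{i, j} \<in> E" for i j
  proof -
    have "sigma i j \<in> edge_vectors E {1..d}"
      using that simple_graph_edgeD[OF sg that] by (auto simp: edge_vectors_def)
    then show ?thesis using EV_H by blast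
  qed
  from EV_H have hull_H: "convex hull (edge_vectors E {1..d}) \<subseteq> H"
    using subspace_imp_convex[OF subspaces(1)] by (rule hull_minimal)
  have M_hull: "M ` (convex hull (edge_vectors E {1..d})) = convex hull (P1 \<union> shift_by D1 ` P2)"
    using img unfolding sym_edge_polytope_eq[OF sg] conv_eq_convex_hull M_def image_comp
      convex_hull_linear_image[OF linear_lin_map] convex_hull_linear_image[OF linM[unfolded M_def]] .
  (* M maps the vertex sigma i j of the edge polytope to a vertex of conv (P1 \<union> shift_by D1 ` P2),
     which lies in P1 or in shift_by D1 ` P2 *)
  have edge: "sigma i j \<in> W1 \<union> W2" if "{i, j} \<in> E" for i j
  proof -
    have "M (sigma i j) extreme_point_of convex hull (P1 \<union> shift_by D1 ` P2)"
      unfolding M_hull[symmetric] using sigma_extreme_point_of_edge_vectors[OF sg that] linM hull_H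
      by (intro extreme_point_of_linear_image inj_on_subset[OF injM]) auto
    then have "M (sigma i j) \<in> P1 \<union> shift_by D1 ` P2" by (rule extreme_point_of_convex_hull)
    then show ?thesis
      using fano_subset_Rn[OF fano(1)] by (auto simp: W1_def W2_def Rn_def shift_by_def)
  qed
  have sym: "sigma x y \<in> W1 \<longleftrightarrow> sigma y x \<in> W1" for x y
    using subspace_neg[OF subspaces(2)] sigma_swap[of x y] by force
  have "\<exists>i j. {i, j} \<in> E \<and> sigma i j \<in> W1"
  proof (rule ccontr)
    assume "\<not> ?thesis"
    then have "edge_vectors E {1..d} \<subseteq> W2" using edge by (auto simp: edge_vectors_def)
    then have "convex hull (edge_vectors E {1..d}) \<subseteq> W2"
      using subspace_imp_convex[OF subspaces(3)] by (rule hull_minimal)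
    moreover have "z \<in> M ` (convex hull (edge_vectors E {1..d}))" if "z \<in> P1" for z
      unfolding M_hull using that hull_subset[of "P1 \<union> shift_by D1 ` P2" convex] by blast
    ultimately have "z 0 = 0" if "z \<in> P1" for z
      using that D(1) by (fastforce simp: W2_def)
    then show False using fano_nonzero_first_coord[OF fano(1)] D(1) by auto
  qed
  moreover have "\<exists>i j. {i, j} \<in> E \<and> sigma i j \<notin> W1"
  proof (rule ccontr)
    assume "\<not> ?thesis"
    then have "edge_vectors E {1..d} \<subseteq> W1" by (auto simp: edge_vectors_def)
    then have "convex hull (edge_vectors E {1..d}) \<subseteq> W1"
      using subspace_imp_convex[OF subspaces(2)] by (rule hull_minimal)
    moreover have "shift_by D1 z \<in> M ` (convex hull (edge_vectors E {1..d}))" if "z \<in> P2" for z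
      unfolding M_hull using that hull_subset[of "P1 \<union> shift_by D1 ` P2" convex] by blast
    ultimately have "shift_by D1 z D1 = 0" if "z \<in> P2" for z
      using that by (fastforce simp: W1_def)
    then show False using fano_nonzero_first_coord[OF fano(2)] D(2) by (auto simp: shift_by_def)
  qed
  ultimately obtain v a b where va: "{v, a} \<in> E" "sigma v a \<in> W1" and vb: "{v, b} \<in> E" "sigma v b \<notin> W1"
    and path: "(adj_in ({1..d} - {v}) E)\<^sup>*\<^sup>* a b"
    using two_connected_bicoloured_vertex[OF sg tc, of "\<lambda>x y. sigma x y \<in> W1"] sym by metis
  (* Splitting sigma a b along a path avoiding v, sigma v a plus its W1-part is a vector of H
     in W1 \<inter> W2 with v-coordinate 1 *)
  define Hv where "Hv = H \<inter> {x. x v = 0}"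
  have "subspace Hv" using subspaces(1) by (auto simp: Hv_def subspace_def)
  have "sigma x y \<in> (W1 \<inter> Hv) \<union> (W2 \<inter> Hv)" if "adj_in ({1..d} - {v}) E x y" for x y
  proof -
    have "{x, y} \<in> E" "x \<noteq> v" "y \<noteq> v" using that by (auto simp: adj_in_def)
    then show ?thesis using edge sigma_H by (auto simp: Hv_def sigma_def)
  qed
  then obtain u1 u2 where u: "u1 \<in> W1 \<inter> Hv" "u2 \<in> W2 \<inter> Hv" "sigma a b = u1 + u2"
    using sigma_path_decomposition[OF subspace_inter[OF subspaces(2) \<open>subspace Hv\<close>]
        subspace_inter[OF subspaces(3) \<open>subspace Hv\<close>] _ path] by blast
  define x where "x = sigma v a + u1"
  have "x \<in> H" using sigma_H[OF va(1)] u(1) subspace_add[OF subspaces(1)] by (auto simp: x_def Hv_def)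
  have "x \<in> W1" using va(2) u(1) subspace_add[OF subspaces(2)] by (simp add: x_def)
  have "sigma v b = x + u2" using u(3) sigma_add_sigma[of v a b] by (simp add: x_def add.assoc)
  then have "x \<in> W2"
    using edge[OF vb(1)] vb(2) u(2) subspace_diff[OF subspaces(3)] by (metis IntD1 UnE add_diff_cancel)
  have "M x k = 0" for k
    using \<open>x \<in> W1\<close> \<open>x \<in> W2\<close> by (cases "k < D1") (auto simp: W1_def W2_def)
  then have "M x = 0" by (simp add: fun_eq_iff)
  then have "x = 0" using kernel \<open>x \<in> H\<close> by blast
  moreover have "x v = 1"
    using u(1) simple_graph_edgeD[OF sg va(1)] by (simp add: x_def Hv_def sigma_def)
  ultimately show False by simp
qed

theorem lemma3p3:
  fixes d :: nat and E :: "nat set set"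
  assumes "d \<ge> 2" and "simple_graph d E" and "graph_connected d E"
  shows "\<not> splits (d - 1) (sym_edge_polytope d E) \<longleftrightarrow> two_connected d E"
  using splits_if_not_two_connected[OF assms] not_splits_if_two_connected[OF assms(1,2)] by blast

end
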